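(* Consider a credit-attribution game with authors $N=\{1,\dots,n\}$, let $x\in N$, let $p^*\in(0,1]^n$ be baseline reliabilities and let $R\subseteq N\setminus\{x\}$. Let $p$ be obtained from $p^*$ by setting $p_j=0$ for $j\in R$ and $p_j=p^*_j$ otherwise. Then $Sh[\overline{v_{FC}}](x)$ computed with parameters $p$ is at least $Sh[\overline{v_{FC}}](x)$ computed with parameters $p^*$; i.e., no removal attack decreases the Shapley value of $x$ in the full credit game.
   Context: A credit-attribution game has authors $N$ and papers $P_1,\dots,P_m$, each paper $P_k$ with author set $Auth_k\subseteq N$ and weight $w_k\in\mathbb{R}_+$. The full credit game has value $v_{FC}(S)=\sum\{w_k: Auth_k\cap S\ne\emptyset\}$. For $T\subseteq S$, $\Pi_{T,S}=\prod_{i\in T}p_i\prod_{i\in S\setminus T}(1-p_i)$; reliability extension $\overline v(S)=\sum_{T\subseteq S}v(T)\Pi_{T,S}$. Shapley value $Sh[v](x)=\frac1{n!}\sum_\pi[v(S^x_\pi\cup\{x\})-v(S^x_\pi)]$ over permutations $\pi$ of $N$, $S^x_\pi$ the players preceding $x$. *)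

theory Defs
  imports "HOL-Analysis.Analysis" "HOL-Combinatorics.Multiset_Permutations"
begin

text \<open>Credit-attribution game: papers indexed by k < m, author sets Auth k,
  weights w k. Full-credit game value.\<close>
definition v_FC :: "nat \<Rightarrow> (nat \<Rightarrow> 'a set) \<Rightarrow> (nat \<Rightarrow> real) \<Rightarrow> 'a set \<Rightarrow> real" where
  "v_FC m Auth w S = (\<Sum>k\<in>{k. k < m \<and> Auth k \<inter> S \<noteq> {}}. w k)"

definition Pi_TS :: "('a \<Rightarrow> real) \<Rightarrow> 'a set \<Rightarrow> 'a set \<Rightarrow> real" where
  "Pi_TS p T S = (\<Prod>i\<in>T. p i) * (\<Prod>i\<in>S - T. 1 - p i)"

definition reliability_ext :: "('a \<Rightarrow> real) \<Rightarrow> ('a set \<Rightarrow> real) \<Rightarrow> 'a set \<Rightarrow> real" where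
  "reliability_ext p v S = (\<Sum>T\<in>Pow S. v T * Pi_TS p T S)"

definition shapley :: "'a set \<Rightarrow> ('a set \<Rightarrow> real) \<Rightarrow> 'a \<Rightarrow> real" where
  "shapley N v x = (1 / fact (card N)) *
     (\<Sum>l\<in>permutations_of_set N.
        v (set (takeWhile (\<lambda>y. y \<noteq> x) l) \<union> {x}) - v (set (takeWhile (\<lambda>y. y \<noteq> x) l)))"

end

theory Submission
  imports Defs
begin

text \<open>Expanding the reliability extension of the full credit game, paper k contributes
  w k times the probability that at least one of its authors in S is reliable. Hence the
  marginal contribution of x to S is the sum, over the papers of x, of w k times p x times
  the probability that no coauthor in S is reliable. Setting p j = 0 for j in R can only
  raise that probability, so every marginal contribution of x, and with it the Shapley
  value of x, can only grow.\<close>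

definition prob_none_reliable :: "('a \<Rightarrow> real) \<Rightarrow> 'a set \<Rightarrow> 'a set \<Rightarrow> real" where
  "prob_none_reliable p A S = (\<Prod>i\<in>S. if i \<in> A then 1 - p i else 1)"

lemma sum_Pi_TS_Pow:
  assumes "finite S"
  shows "(\<Sum>T\<in>Pow S. Pi_TS p T S) = 1"
proof -
  have "(\<Prod>i\<in>S. p i + (1 - p i)) = (\<Sum>T\<in>Pow S. Pi_TS p T S)"
    unfolding Pi_TS_def by (rule prod_add[OF assms])
  then show ?thesis by simp
qed

lemma sum_Pi_TS_Pow_disjoint:
  assumes "finite S"
  shows "(\<Sum>T\<in>Pow S. (if A \<inter> T = {} then 1 else 0) * Pi_TS p T S) = prob_none_reliable p A S"
proof -
  define f where "f i = (if i \<in> A then 0 else p i)" for i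
  have "prob_none_reliable p A S = (\<Prod>i\<in>S. f i + (1 - p i))"
    unfolding prob_none_reliable_def f_def by (rule prod.cong) auto
  also have "\<dots> = (\<Sum>T\<in>Pow S. prod f T * (\<Prod>i\<in>S - T. 1 - p i))"
    by (rule prod_add[OF assms])
  also have "\<dots> = (\<Sum>T\<in>Pow S. (if A \<inter> T = {} then 1 else 0) * Pi_TS p T S)"
  proof (rule sum.cong)
    fix T assume "T \<in> Pow S"
    then have "finite T" using assms finite_subset by auto
    moreover have "prod f T = (if A \<inter> T = {} then prod p T else 0)"
      using \<open>finite T\<close> by (auto simp: f_def prod_zero_iff intro!: prod.cong)
    ultimately show "prod f T * (\<Prod>i\<in>S - T. 1 - p i)
        = (if A \<inter> T = {} then 1 else 0) * Pi_TS p T S"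
      by (simp add: Pi_TS_def)
  qed simp
  finally show ?thesis by simp
qed

lemma v_FC_eq_sum_indicator:
  "v_FC m Auth w T = (\<Sum>k<m. w k * (1 - (if Auth k \<inter> T = {} then 1 else 0)))"
proof -
  have "v_FC m Auth w T = (\<Sum>k\<in>{..<m} \<inter> {k. Auth k \<inter> T \<noteq> {}}. w k)"
    unfolding v_FC_def by (rule sum.cong) auto
  also have "\<dots> = (\<Sum>k<m. w k * (1 - (if Auth k \<inter> T = {} then 1 else 0)))"
    by (simp add: sum.inter_restrict) (rule sum.cong; simp)
  finally show ?thesis .
qed

lemma reliability_ext_v_FC:
  assumes "finite S"
  shows "reliability_ext p (v_FC m Auth w) S = (\<Sum>k<m. w k * (1 - prob_none_reliable p (Auth k) S))"
proof -
  let ?I = "\<lambda>k T. (if Auth k \<inter> T = {} then 1 else 0) :: real"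
  have "reliability_ext p (v_FC m Auth w) S =
     (\<Sum>k<m. w k * (\<Sum>T\<in>Pow S. Pi_TS p T S - ?I k T * Pi_TS p T S))"
    unfolding reliability_ext_def v_FC_eq_sum_indicator sum_distrib_right sum_distrib_left
    by (subst sum.swap) (simp add: algebra_simps)
  also have "\<dots> = (\<Sum>k<m. w k * (1 - prob_none_reliable p (Auth k) S))"
    by (simp add: sum_subtractf sum_Pi_TS_Pow[OF assms] sum_Pi_TS_Pow_disjoint[OF assms])
  finally show ?thesis .
qed

lemma reliability_ext_v_FC_marginal:
  assumes "finite S" "x \<notin> S"
  shows "reliability_ext p (v_FC m Auth w) (S \<union> {x}) - reliability_ext p (v_FC m Auth w) S
     = (\<Sum>k<m. w k * prob_none_reliable p (Auth k) S * (if x \<in> Auth k then p x else 0))"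
proof -
  have "prob_none_reliable p A (S \<union> {x})
      = prob_none_reliable p A S * (if x \<in> A then 1 - p x else 1)" for A
    using assms unfolding prob_none_reliable_def by (simp add: mult.commute)
  then show ?thesis
    using assms by (simp add: reliability_ext_v_FC sum_subtractf[symmetric] algebra_simps)
      (rule sum.cong; simp add: algebra_simps)
qed

lemma prob_none_reliable_antimono:
  assumes "\<And>i. i \<in> S \<Longrightarrow> q i \<le> p i" "\<And>i. i \<in> S \<Longrightarrow> p i \<le> 1"
  shows "prob_none_reliable p A S \<le> prob_none_reliable q A S"
  unfolding prob_none_reliable_def
  by (rule prod_mono) (use assms in \<open>fastforce\<close>)

lemma reliability_ext_v_FC_marginal_antimono:
  assumes "finite S" "x \<notin> S"
    and "\<And>i. i \<in> S \<Longrightarrow> q i \<le> p i" "\<And>i. i \<in> S \<Longrightarrow> p i \<le> 1"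
    and "q x = p x" "0 \<le> p x" "\<forall>k<m. w k \<ge> 0"
  shows "reliability_ext p (v_FC m Auth w) (S \<union> {x}) - reliability_ext p (v_FC m Auth w) S
      \<le> reliability_ext q (v_FC m Auth w) (S \<union> {x}) - reliability_ext q (v_FC m Auth w) S"
  unfolding reliability_ext_v_FC_marginal[OF assms(1,2)] \<open>q x = p x\<close>
proof (rule sum_mono)
  fix k assume "k \<in> {..<m}"
  then show "w k * prob_none_reliable p (Auth k) S * (if x \<in> Auth k then p x else 0)
      \<le> w k * prob_none_reliable q (Auth k) S * (if x \<in> Auth k then p x else 0)"
    using assms prob_none_reliable_antimono[of S q p "Auth k"]
    by (intro mult_right_mono mult_left_mono) auto
qed

lemma shapley_mono:
  assumes "\<And>S. S \<subseteq> N - {x} \<Longrightarrow> v (S \<union> {x}) - v S \<le> v' (S \<union> {x}) - v' S"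
  shows "shapley N v x \<le> shapley N v' x"
  unfolding shapley_def
proof (intro mult_left_mono sum_mono)
  fix l assume "l \<in> permutations_of_set N"
  then have "set (takeWhile (\<lambda>y. y \<noteq> x) l) \<subseteq> N - {x}"
    by (auto simp: permutations_of_set_def dest: set_takeWhileD)
  then show "v (set (takeWhile (\<lambda>y. y \<noteq> x) l) \<union> {x}) - v (set (takeWhile (\<lambda>y. y \<noteq> x) l))
      \<le> v' (set (takeWhile (\<lambda>y. y \<noteq> x) l) \<union> {x}) - v' (set (takeWhile (\<lambda>y. y \<noteq> x) l))"
    by (rule assms)
qed simp

theorem theorem6:
  fixes n m :: nat and Auth :: "nat \<Rightarrow> nat set" and w :: "nat \<Rightarrow> real"
    and pstar :: "nat \<Rightarrow> real" and x :: nat and R :: "nat set"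
  assumes Auth_sub: "\<forall>k<m. Auth k \<subseteq> {1..n}"
    and w_nonneg: "\<forall>k<m. w k \<ge> 0"
    and x_in: "x \<in> {1..n}"
    and pstar_range: "\<forall>i\<in>{1..n}. 0 < pstar i \<and> pstar i \<le> 1"
    and R_sub: "R \<subseteq> {1..n} - {x}"
  shows "shapley {1..n} (reliability_ext (\<lambda>j. if j \<in> R then 0 else pstar j) (v_FC m Auth w)) x
         \<ge> shapley {1..n} (reliability_ext pstar (v_FC m Auth w)) x"
proof (rule shapley_mono)
  fix S assume S: "S \<subseteq> {1..n} - {x}"
  show "reliability_ext pstar (v_FC m Auth w) (S \<union> {x}) - reliability_ext pstar (v_FC m Auth w) S
      \<le> reliability_ext (\<lambda>j. if j \<in> R then 0 else pstar j) (v_FC m Auth w) (S \<union> {x})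
         - reliability_ext (\<lambda>j. if j \<in> R then 0 else pstar j) (v_FC m Auth w) S"
    using S x_in R_sub pstar_range w_nonneg
    by (intro reliability_ext_v_FC_marginal_antimono)
       (auto intro: finite_subset simp: less_imp_le)
qed

end
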